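(* Let $n\ge2$, $\epsilon=\pm$, and $\lambda=(\lambda_1\ge\lambda_2\ge\dots\ge\lambda_r\ge0)$ a partition of $n$ with $\lambda_1\le n/2$. Then the unipotent character $\psi^\lambda$ of $\mathrm{GL}^\epsilon_n(q)$ satisfies $\psi^\lambda(1)\ge q^{n^2/4}$.
   Context: $\mathrm{GL}^+_n(q)=\mathrm{GL}_n(q)$, $\mathrm{GL}^-_n(q)=\mathrm{GU}_n(q)$. Unipotent characters $\psi^\lambda$ are labeled by partitions $\lambda\vdash n$ in the standard way ($(n)$ trivial, $(1^n)$ Steinberg), with degree given by $\psi^\lambda(1)=q^{a(\lambda)}\prod_{i=1}^n(q^i-\epsilon^i)/\prod_h(q^{l(h)}-\epsilon^{l(h)})$, where $a(\lambda)=\sum_i(i-1)\lambda_i$, $h$ runs over the hooks of the Young diagram of $\lambda$ and $l(h)$ is the hook length. *)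

theory Defs
  imports Complex_Main "HOL-Computational_Algebra.Primes"
begin

text \<open>A partition of n: list of positive parts, weakly decreasing, summing to n.
  Parts are 0-indexed: lam ! 0 = lambda_1.\<close>
definition is_partition :: "nat list \<Rightarrow> nat \<Rightarrow> bool" where
  "is_partition lam n \<longleftrightarrow> sorted_wrt (\<ge>) lam \<and> (\<forall>x\<in>set lam. 0 < x) \<and> sum_list lam = n"

definition conj_part :: "nat list \<Rightarrow> nat \<Rightarrow> nat" where
  "conj_part lam j = card {i. i < length lam \<and> j < lam ! i}"

definition cells :: "nat list \<Rightarrow> (nat \<times> nat) set" where
  "cells lam = {(i, j). i < length lam \<and> j < lam ! i}"

text \<open>Hook length of the cell (i,j) (0-indexed): arm + leg + 1.\<close>
definition hook_length :: "nat list \<Rightarrow> nat \<times> nat \<Rightarrow> nat" where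
  "hook_length lam c = (case c of (i, j) \<Rightarrow> (lam ! i - j) + (conj_part lam j - i) - 1)"

text \<open>a(lambda) = sum_i (i-1) lambda_i with 1-indexed rows.\<close>
definition a_inv :: "nat list \<Rightarrow> nat" where
  "a_inv lam = (\<Sum>i<length lam. i * lam ! i)"

text \<open>Degree of the unipotent character psi^lambda of GL^eps_n(q), eps = 1 (GL) or -1 (GU).\<close>
definition unip_degree :: "real \<Rightarrow> real \<Rightarrow> nat list \<Rightarrow> real" where
  "unip_degree eps q lam =
     q ^ a_inv lam * (\<Prod>i\<in>{1..sum_list lam}. q ^ i - eps ^ i)
     / (\<Prod>c\<in>cells lam. q ^ hook_length lam c - eps ^ hook_length lam c)"

end

theory Submission
  imports Defs "HOL-Analysis.Infinite_Products"
begin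

text \<open>
  Write \<lambda> = (x, \<mu>) with |\<mu>| = s. Removing the first row multiplies the degree by q^(x s)
  times a ratio of factors 1 - (\<epsilon>/q)^k: the numerator has k = s + 1, ..., s + x, the denominator
  the first-row hook lengths. So the degree is q^e(\<lambda>), e(\<lambda>) = \<Sum>_{i<j} \<lambda>_i \<lambda>_j, times a product
  of such ratios, and 4 e(\<lambda>) = 2 (n^2 - \<Sum> \<lambda>_i^2) \<ge> n^2 since \<lambda>_1 \<le> n/2.

  For GL each factor of a ratio is at least 1, as every first-row hook is at most the
  corresponding numerator index. For GU the factors are 1 \<plusminus> q^-k with alternating signs. The
  first-row hooks are x distinct elements of {1..s + x}; if V is their complement, the ratio
  equals \<Prod>_V / \<Prod>_{1..s}, and estimating both products (pairing consecutive factors) bounds it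
  below by 1/q, and by 1 for rows of length 1. Thus at most one factor q is lost per part \<ge> 2,
  which the slack in 4 e(\<lambda>) \<ge> n^2 absorbs except for \<lambda> = (m, m) and (2, 2, 1); there the
  ratios are evaluated directly.
\<close>

lemma conj_part_Nil [simp]: "conj_part [] j = 0"
  by (simp add: conj_part_def)

lemma conj_part_Cons:
  "conj_part (x # mu) j = (if j < x then Suc (conj_part mu j) else conj_part mu j)"
proof -
  define S where "S = {i. i < length mu \<and> j < mu ! i}"
  have "finite S" unfolding S_def by (rule finite_subset[of _ "{..<length mu}"]) auto
  moreover have "{i. i < length (x # mu) \<and> j < (x # mu) ! i} =
      (if j < x then insert 0 (Suc ` S) else Suc ` S)"
  proof (rule set_eqI)
    fix i
    show "i \<in> {i. i < length (x # mu) \<and> j < (x # mu) ! i} \<longleftrightarrow>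
        i \<in> (if j < x then insert 0 (Suc ` S) else Suc ` S)"
      by (cases i) (auto simp: S_def)
  qed
  ultimately show ?thesis
    unfolding conj_part_def S_def[symmetric] by (simp add: card_image image_iff)
qed

lemma conj_part_le_length: "conj_part mu j \<le> length mu"
  unfolding conj_part_def by (rule order.trans[OF card_mono[of "{..<length mu}"]]) auto

lemma conj_part_antimono: "j \<le> j' \<Longrightarrow> conj_part mu j' \<le> conj_part mu j"
  unfolding conj_part_def by (rule card_mono) auto

lemma length_le_sum_list: "\<forall>p\<in>set mu. 0 < p \<Longrightarrow> length mu \<le> sum_list (mu :: nat list)"
  by (induction mu) auto

lemma conj_part_le_sum_list: "\<forall>p\<in>set mu. 0 < p \<Longrightarrow> conj_part mu j \<le> sum_list mu"
  using conj_part_le_length length_le_sum_list le_trans by blast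

lemma sum_conj_part:
  assumes "\<forall>p\<in>set mu. p \<le> x"
  shows "(\<Sum>j<x. conj_part mu j) = sum_list mu"
  using assms
proof (induction mu)
  case (Cons p mu)
  have "(\<Sum>j<x. conj_part (p # mu) j) = (\<Sum>j<x. (if j < p then 1 else 0) + conj_part mu j)"
    by (rule sum.cong) (auto simp: conj_part_Cons)
  also have "\<dots> = card ({..<x} \<inter> {..<p}) + sum_list mu"
    using Cons by (simp add: sum.distrib sum.If_cases lessThan_def)
  also have "{..<x} \<inter> {..<p} = {..<p}" using Cons.prems by auto
  finally show ?case by simp
qed simp

lemma a_inv_Cons: "a_inv (x # mu) = a_inv mu + sum_list mu"
proof -
  have "a_inv (x # mu) = (\<Sum>i<Suc (length mu). i * (x # mu) ! i)"
    by (simp add: a_inv_def)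
  also have "\<dots> = (\<Sum>i<length mu. Suc i * mu ! i)"
    by (subst sum.lessThan_Suc_shift) simp
  finally have "a_inv (x # mu) = (\<Sum>i<length mu. Suc i * mu ! i)" .
  then show ?thesis
    by (simp add: a_inv_def sum.distrib sum_list_sum_nth atLeast0LessThan)
qed

lemma cells_Cons:
  "cells (x # mu) = (\<lambda>j. (0, j)) ` {..<x} \<union> (\<lambda>(i, j). (Suc i, j)) ` cells mu"
  unfolding cells_def by (auto simp: image_iff nth_Cons split: nat.splits)

lemma finite_cells: "finite (cells mu)"
proof -
  have "cells mu = (\<Union>i<length mu. {i} \<times> {..<mu ! i})" unfolding cells_def by auto
  then show ?thesis by simp
qed

lemma hook_length_Cons_first_row:
  "j < x \<Longrightarrow> hook_length (x # mu) (0, j) = x - j + conj_part mu j"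
  by (simp add: hook_length_def conj_part_Cons)

lemma hook_length_Cons_Suc:
  assumes "sorted_wrt (\<ge>) (x # mu)" "(i, j) \<in> cells mu"
  shows "hook_length (x # mu) (Suc i, j) = hook_length mu (i, j)"
proof -
  have "mu ! i \<le> x" using assms nth_mem by (fastforce simp: cells_def)
  then show ?thesis using assms(2) by (simp add: cells_def hook_length_def conj_part_Cons)
qed

lemma prod_cells_Cons:
  fixes g :: "nat \<Rightarrow> 'a::comm_monoid_mult"
  assumes "sorted_wrt (\<ge>) (x # mu)"
  shows "(\<Prod>c\<in>cells (x # mu). g (hook_length (x # mu) c)) =
    (\<Prod>j<x. g (x - j + conj_part mu j)) * (\<Prod>c\<in>cells mu. g (hook_length mu c))"
proof -
  have "inj_on (\<lambda>j. (0::nat, j)) {..<x}" "inj_on (\<lambda>(i, j). (Suc i, j)) (cells mu)"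
    by (auto simp: inj_on_def)
  moreover have "g (hook_length (x # mu) ((\<lambda>(i, j). (Suc i, j)) c)) = g (hook_length mu c)"
    if "c \<in> cells mu" for c
    using hook_length_Cons_Suc[OF assms] that by (cases c) simp
  ultimately show ?thesis
    unfolding cells_Cons
    by (subst prod.union_disjoint)
       (auto simp: finite_cells prod.reindex hook_length_Cons_first_row intro!: prod.cong)
qed

lemma prod_atLeast1_atMost_add:
  fixes f :: "nat \<Rightarrow> 'a::comm_monoid_mult"
  shows "(\<Prod>i\<in>{1..s + x}. f i) = (\<Prod>i\<in>{1..s}. f i) * (\<Prod>j<x. f (s + x - j))"
proof (induction x)
  case (Suc x)
  have "{1..s + Suc x} = insert (s + Suc x) {1..s + x}" by auto
  moreover have "(\<Prod>j<Suc x. f (s + Suc x - j)) = f (s + Suc x) * (\<Prod>j<x. f (s + x - j))"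
    by (subst prod.lessThan_Suc_shift) simp
  ultimately show ?case using Suc by (simp add: mult_ac)
qed simp

definition one_minus_pow :: "real \<Rightarrow> nat \<Rightarrow> real" where
  "one_minus_pow t k = 1 - t ^ k"

definition first_row_ratio :: "real \<Rightarrow> nat \<Rightarrow> nat list \<Rightarrow> real" where
  "first_row_ratio t x mu =
     (\<Prod>j<x. one_minus_pow t (sum_list mu + x - j) / one_minus_pow t (x - j + conj_part mu j))"

lemma one_minus_pow_pos: "\<bar>t\<bar> < 1 \<Longrightarrow> 1 \<le> k \<Longrightarrow> 0 < one_minus_pow t k"
proof -
  assume "\<bar>t\<bar> < 1" "1 \<le> k"
  then have "\<bar>t ^ k\<bar> < 1" by (simp add: power_abs power_less_one_iff)
  then show ?thesis by (simp add: one_minus_pow_def)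
qed

lemma pow_diff_pow_eq:
  "(q::real) \<noteq> 0 \<Longrightarrow> q ^ k - eps ^ k = q ^ k * one_minus_pow (eps / q) k"
  by (simp add: one_minus_pow_def power_divide field_simps)

lemma unip_degree_Nil: "unip_degree eps q [] = 1"
  by (simp add: unip_degree_def a_inv_def cells_def)

lemma unip_degree_Cons:
  assumes "sorted_wrt (\<ge>) (x # mu)" "(q::real) \<noteq> 0"
  shows "unip_degree eps q (x # mu) =
    q ^ (x * sum_list mu) * first_row_ratio (eps / q) x mu * unip_degree eps q mu"
proof -
  define s where "s = sum_list mu"
  define G where "G k = q ^ k - eps ^ k" for k
  define f where "f k = one_minus_pow (eps / q) k" for k
  define col where "col j = conj_part mu j" for j
  define P where "P = (\<Prod>i\<in>{1..s}. G i)"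
  define H where "H = (\<Prod>c\<in>cells mu. G (hook_length mu c))"
  define e where "e = (\<Sum>j<x. x - j)"
  have sum_c: "(\<Sum>j<x. col j) = s"
    unfolding col_def s_def by (rule sum_conj_part) (use assms(1) in auto)
  have "(\<Sum>j<x. s + x - j) = (\<Sum>j<x. s + (x - j))" by (rule sum.cong) auto
  then have exp_num: "(\<Sum>j<x. s + x - j) = x * s + e"
    using sum.distrib[of "\<lambda>j. s" "\<lambda>j. x - j" "{..<x}"] by (simp add: e_def mult.commute)
  have exp_den: "(\<Sum>j<x. x - j + col j) = e + s" by (simp only: e_def sum.distrib sum_c)
  have num: "(\<Prod>j<x. G (s + x - j)) = q ^ (\<Sum>j<x. s + x - j) * (\<Prod>j<x. f (s + x - j))"
    unfolding G_def f_def using assms(2) by (simp add: pow_diff_pow_eq power_sum prod.distrib)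
  have den: "(\<Prod>j<x. G (x - j + col j)) = q ^ (\<Sum>j<x. x - j + col j) * (\<Prod>j<x. f (x - j + col j))"
    unfolding G_def f_def using assms(2) by (simp add: pow_diff_pow_eq power_sum prod.distrib)
  have "unip_degree eps q (x # mu) =
      q ^ (a_inv mu + s) * (P * (\<Prod>j<x. G (s + x - j))) / ((\<Prod>j<x. G (x - j + col j)) * H)"
  proof -
    have "unip_degree eps q (x # mu) = q ^ a_inv (x # mu) * (\<Prod>i\<in>{1..s + x}. G i)
        / (\<Prod>c\<in>cells (x # mu). G (hook_length (x # mu) c))"
      by (simp add: unip_degree_def G_def s_def add.commute)
    then show ?thesis
      by (simp only: prod_atLeast1_atMost_add prod_cells_Cons[OF assms(1)] a_inv_Cons P_def H_def
          col_def s_def)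
  qed
  also have "\<dots> = q ^ (x * s) * ((\<Prod>j<x. f (s + x - j)) / (\<Prod>j<x. f (x - j + col j)))
      * (q ^ a_inv mu * P / H)"
    unfolding num den exp_num exp_den using assms(2) by (simp add: power_add field_simps)
  finally show ?thesis
    by (simp add: first_row_ratio_def unip_degree_def prod_dividef f_def col_def s_def P_def H_def
        G_def)
qed

fun pair_products :: "nat list \<Rightarrow> nat" where
  "pair_products [] = 0"
| "pair_products (x # mu) = x * sum_list mu + pair_products mu"

definition big_parts :: "nat list \<Rightarrow> nat" where
  "big_parts mu = length (filter (\<lambda>p. 2 \<le> p) mu)"

lemma big_parts_Nil [simp]: "big_parts [] = 0"
  by (simp add: big_parts_def)

lemma big_parts_Cons [simp]: "big_parts (x # mu) = (if 2 \<le> x then 1 else 0) + big_parts mu"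
  by (simp add: big_parts_def)

lemma big_parts_eq_0: "\<forall>p\<in>set mu. p \<le> 1 \<Longrightarrow> big_parts mu = 0"
  by (induction mu) auto

lemma big_parts_add_length_le:
  "\<forall>p\<in>set mu. 0 < p \<Longrightarrow> big_parts mu + length mu \<le> sum_list mu"
  by (induction mu) auto

lemma pair_products_sum_squares:
  "2 * pair_products mu + (\<Sum>p\<leftarrow>mu. p * p) = (sum_list mu)\<^sup>2"
  by (induction mu) (auto simp: power2_eq_square algebra_simps)

lemma sum_squares_le:
  "\<forall>p\<in>set mu. p \<le> m \<Longrightarrow> (\<Sum>p\<leftarrow>mu. p * p) \<le> m * sum_list (mu :: nat list)"
proof (induction mu)
  case (Cons a mu)
  then have "a * a \<le> m * a" "(\<Sum>p\<leftarrow>mu. p * p) \<le> m * sum_list mu"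
    by (simp_all add: mult_le_mono1)
  then show ?case by (simp only: distrib_left sum_list.Cons list.map add_mono)
qed simp

lemma square_le_four_pair_products:
  assumes "\<forall>p\<in>set lam. p \<le> m" "2 * m \<le> sum_list lam"
  shows "(sum_list lam)\<^sup>2 \<le> 4 * pair_products lam"
proof -
  have "2 * m * sum_list lam \<le> sum_list lam * sum_list lam"
    using assms(2) by (rule mult_right_mono) simp
  then show ?thesis
    using pair_products_sum_squares[of lam] sum_squares_le[OF assms(1)]
    unfolding power2_eq_square by linarith
qed

lemma sum_list_le_pair_products:
  "\<forall>p\<in>set mu. 0 < p \<Longrightarrow> 2 \<le> length mu \<Longrightarrow> sum_list mu \<le> pair_products mu + 1"
proof (induction mu)
  case (Cons a nu)
  show ?case
  proof (cases "2 \<le> length nu")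
    case True
    then have "1 \<le> sum_list nu" "sum_list nu \<le> pair_products nu + 1"
      using Cons big_parts_add_length_le[of nu] by auto
    moreover have "a \<le> a * sum_list nu" using \<open>1 \<le> sum_list nu\<close> by simp
    ultimately show ?thesis by (simp only: sum_list.Cons pair_products.simps)
  next
    case False
    then obtain b where "nu = [b]" using Cons.prems by (cases nu) (auto simp: le_Suc_eq)
    moreover obtain a' b' where "a = Suc a'" "b = Suc b'"
      using Cons.prems \<open>nu = [b]\<close> by (metis gr0_implies_Suc list.set_intros(1,2))
    ultimately show ?thesis by simp
  qed
qed simp

lemma big_parts_Suc_le_pair_products:
  assumes "\<forall>p\<in>set mu. 0 < p" "2 \<le> length mu"
  shows "Suc (big_parts mu) \<le> pair_products mu"
  using big_parts_add_length_le[OF assms(1)] sum_list_le_pair_products[OF assms] assms(2)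
  by linarith

lemma big_parts_add_2_le_pair_products:
  assumes "\<forall>p\<in>set mu. 0 < p" "3 \<le> length mu"
  shows "big_parts mu + 2 \<le> pair_products mu"
proof -
  obtain a nu where mu: "mu = a # nu" using assms(2) by (cases mu) auto
  have pos: "\<forall>p\<in>set nu. 0 < p" and len: "2 \<le> length nu" and "1 \<le> a"
    using assms mu by auto
  have "big_parts nu + 2 \<le> sum_list nu" "sum_list nu \<le> pair_products nu + 1"
    using big_parts_add_length_le[OF pos] sum_list_le_pair_products[OF pos len] len by auto
  moreover have "sum_list nu \<le> a * sum_list nu" using \<open>1 \<le> a\<close> by simp
  moreover have "big_parts mu \<le> big_parts nu + 1" using mu by simp
  moreover have "pair_products mu = a * sum_list nu + pair_products nu" using mu by simp
  ultimately show ?thesis by linarith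
qed

lemma big_parts_add_2_le_pair_products_Suc:
  assumes pos: "\<forall>p\<in>set mu. 0 < p" and sorted: "sorted_wrt (\<ge>) mu" and le_x: "\<forall>p\<in>set mu. p \<le> x"
    and "2 \<le> x" "sum_list mu = Suc x" "x # mu \<noteq> [2, 2, 1]" "2 \<le> length mu"
  shows "big_parts mu + 2 \<le> pair_products mu"
proof (cases "3 \<le> length mu")
  case True
  then show ?thesis by (rule big_parts_add_2_le_pair_products[OF pos])
next
  case False
  then have "length mu = 2" using \<open>2 \<le> length mu\<close> by simp
  then obtain a c where mu: "mu = [a, c]"
    by (metis length_0_conv length_Suc_conv numeral_2_eq_2)
  then have "a + c = Suc x" "0 < c" "c \<le> a" "a \<le> x"
    using assms by auto
  then consider "c = 1" "a = x" "3 \<le> x" | "2 \<le> c" "2 \<le> a"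
    using \<open>x # mu \<noteq> [2, 2, 1]\<close> \<open>2 \<le> x\<close> mu by fastforce
  then show ?thesis
  proof cases
    case 2
    then have "2 * 2 \<le> a * c" by (intro mult_le_mono) auto
    then show ?thesis using mu by simp
  qed (use mu in auto)
qed

lemma tail_square_add_big_parts_le:
  fixes mu :: "nat list"
  defines "s \<equiv> sum_list mu"
  assumes pos: "\<forall>p\<in>set mu. 0 < p" and sorted: "sorted_wrt (\<ge>) mu"
    and le_x: "\<forall>p\<in>set mu. p \<le> x" and "2 \<le> x" "x \<le> s" and "mu \<noteq> [x]" "x # mu \<noteq> [2, 2, 1]"
  shows "(s - x)\<^sup>2 + 4 * Suc (big_parts mu) \<le> 4 * pair_products mu"
proof -
  have "2 \<le> length mu"
  proof (rule ccontr)
    assume "\<not> 2 \<le> length mu"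
    then consider "mu = []" | a where "mu = [a]"
      by (metis One_nat_def length_0_conv length_Suc_conv less_2_cases not_le)
    then show False using assms(5-7) le_x unfolding s_def by cases auto
  qed
  consider "s = x" | "s = Suc x" | "x + 2 \<le> s" using \<open>x \<le> s\<close> by linarith
  then show ?thesis
  proof cases
    case 1
    then show ?thesis using big_parts_Suc_le_pair_products[OF pos \<open>2 \<le> length mu\<close>] by simp
  next
    case 2
    then have "big_parts mu + 2 \<le> pair_products mu"
      using big_parts_add_2_le_pair_products_Suc[OF pos sorted le_x] assms(5,8) \<open>2 \<le> length mu\<close>
      unfolding s_def by blast
    then show ?thesis using 2 by simp
  next
    case 3
    then obtain e where s: "s = x + (e + 2)" by (metis add.commute le_Suc_ex add.left_commute)
    have "2 * pair_products mu + x * s \<ge> s * s"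
      using pair_products_sum_squares[of mu] sum_squares_le[OF le_x]
      unfolding s_def power2_eq_square by linarith
    moreover have "2 * big_parts mu \<le> s"
      using big_parts_add_length_le[OF pos] length_filter_le[of "(\<le>) 2" mu]
      unfolding s_def big_parts_def by linarith
    ultimately show ?thesis using s \<open>2 \<le> x\<close>
      by (simp add: power2_eq_square algebra_simps)
  qed
qed

lemma square_add_four_big_parts_le:
  assumes pos: "\<forall>p\<in>set (x # mu). 0 < p" and sorted: "sorted_wrt (\<ge>) (x # mu)"
    and "x \<le> sum_list mu" and "mu \<noteq> [x]" and "x # mu \<noteq> [2, 2, 1]"
  shows "(sum_list (x # mu))\<^sup>2 + 4 * big_parts (x # mu) \<le> 4 * pair_products (x # mu)"
proof -
  define s where "s = sum_list mu"
  have le_x: "\<forall>p\<in>set mu. p \<le> x" using sorted by simp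
  obtain d where "s = x + d" using \<open>x \<le> sum_list mu\<close> le_Suc_ex unfolding s_def by blast
  then have "(x + s)\<^sup>2 = (s - x)\<^sup>2 + 4 * x * s" by (simp add: power2_eq_square algebra_simps)
  moreover consider "x = 1" | "2 \<le> x" using pos by fastforce
  then have "(s - x)\<^sup>2 + 4 * big_parts (x # mu) \<le> 4 * pair_products mu"
  proof cases
    case 1
    then have "big_parts (x # mu) = 0" using le_x by (simp add: big_parts_eq_0)
    moreover have "(\<Sum>p\<leftarrow>mu. p * p) \<le> s" using sum_squares_le[OF le_x] 1 s_def by simp
    moreover have "1 \<le> s" using 1 \<open>x \<le> sum_list mu\<close> s_def by simp
    ultimately show ?thesis
      using pair_products_sum_squares[of mu] 1 unfolding s_def[symmetric] power2_eq_square
      by (simp add: le_Suc_ex algebra_simps)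
  next
    case 2
    then show ?thesis
      using tail_square_add_big_parts_le[of mu x] pos sorted le_x assms(3-5) unfolding s_def by simp
  qed
  ultimately show ?thesis by (simp add: s_def algebra_simps)
qed

lemma prod_lessThan_add2:
  fixes f :: "nat \<Rightarrow> 'a::comm_monoid_mult"
  shows "(\<Prod>k<L + 2. f (a + k)) = f a * f (Suc a) * (\<Prod>k<L. f (a + 2 + k))"
  by (simp del: prod.lessThan_Suc add: prod.lessThan_Suc_shift numeral_2_eq_2 mult.assoc)

lemma sum_power_atLeast1_le:
  fixes y :: real
  assumes "0 \<le> y" "y < 1"
  shows "(\<Sum>k=1..N. y ^ k) \<le> y / (1 - y)"
proof -
  have "(1 - y) * (\<Sum>k=1..N. y ^ k) = y - y ^ Suc N"
    using sum_gp_multiplied[of 1 N y] by (cases "N = 0") auto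
  then have "(1 - y) * (\<Sum>k=1..N. y ^ k) \<le> y" using assms by simp
  then show ?thesis using assms by (simp add: field_simps)
qed

lemma sum_even_powers_le:
  fixes r :: real
  assumes "V \<subseteq> {1..N}" "0 < r" "r < 1"
  shows "(\<Sum>v\<in>{v\<in>V. even v}. r ^ v) \<le> r\<^sup>2 / (1 - r\<^sup>2)"
proof -
  define W where "W = {v\<in>V. even v}"
  have inj: "inj_on (\<lambda>v. v div 2) W" unfolding W_def by (auto simp: inj_on_def elim!: evenE)
  have "(\<Sum>v\<in>W. r ^ v) = (\<Sum>v\<in>W. (r\<^sup>2) ^ (v div 2))"
    by (intro sum.cong) (auto simp: W_def power_mult[symmetric] elim!: evenE)
  also have "\<dots> = (\<Sum>k\<in>(\<lambda>v. v div 2) ` W. (r\<^sup>2) ^ k)"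
    by (simp add: sum.reindex[OF inj])
  also have "\<dots> \<le> (\<Sum>k=1..N. (r\<^sup>2) ^ k)"
    by (rule sum_mono2) (use assms in \<open>auto simp: W_def elim!: evenE\<close>)
  also have "\<dots> \<le> r\<^sup>2 / (1 - r\<^sup>2)"
    by (rule sum_power_atLeast1_le) (use assms in \<open>auto simp: power_less_one_iff\<close>)
  finally show ?thesis unfolding W_def .
qed

context
  fixes r :: real
  assumes r_pos: "0 < r" and r_le_half: "r \<le> 1/2"
begin

lemma one_minus_pow_neg_even: "even k \<Longrightarrow> one_minus_pow (-r) k = 1 - r ^ k"
  by (simp add: one_minus_pow_def)

lemma one_minus_pow_neg_odd: "odd k \<Longrightarrow> one_minus_pow (-r) k = 1 + r ^ k"
  by (simp add: one_minus_pow_def)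

lemma one_minus_pow_neg_pos: "1 \<le> k \<Longrightarrow> 0 < one_minus_pow (-r) k"
  using r_pos r_le_half by (intro one_minus_pow_pos) auto

lemma prod_one_minus_pow_neg_nonneg:
  "(\<And>k. k \<in> A \<Longrightarrow> 1 \<le> g k) \<Longrightarrow> 0 \<le> (\<Prod>k\<in>A. one_minus_pow (-r) (g k))"
  by (intro prod_nonneg) (simp add: less_imp_le one_minus_pow_neg_pos)

lemma one_minus_pow_neg_pair_le_1:
  assumes "even e"
  shows "one_minus_pow (-r) e * one_minus_pow (-r) (Suc e) \<le> 1"
proof -
  have "0 \<le> r ^ e * (1 - r)" "0 \<le> r * (r ^ e * r ^ e)" using r_pos r_le_half by simp_all
  then show ?thesis
    using assms by (simp add: one_minus_pow_neg_even one_minus_pow_neg_odd algebra_simps)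
qed

lemma one_minus_pow_neg_pair_ge_1:
  assumes "odd m"
  shows "1 \<le> one_minus_pow (-r) m * one_minus_pow (-r) (Suc m)"
proof -
  have "r * r ^ m \<le> r" using r_pos r_le_half by (simp add: power_le_one mult_left_le)
  then have "0 \<le> 1 - r - r * r ^ m" using r_le_half by linarith
  then have "0 \<le> r ^ m * (1 - r - r * r ^ m)" using r_pos by simp
  then show ?thesis
    using assms by (simp add: one_minus_pow_neg_even one_minus_pow_neg_odd algebra_simps)
qed

lemma one_minus_pow_neg_pair_mono:
  assumes "even e"
  shows "one_minus_pow (-r) e * one_minus_pow (-r) (Suc e)
    \<le> one_minus_pow (-r) (e + d) * one_minus_pow (-r) (Suc (e + d))"
proof (cases "even d")
  case True
  define u w where "u = r ^ e" and "w = r ^ (e + d)"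
  have "w \<le> u" "0 \<le> w"
    unfolding u_def w_def using r_pos r_le_half by (simp_all add: power_decreasing)
  then have "0 \<le> (u - w) * (1 - r) + r * (u * u - w * w)"
    using r_pos r_le_half by (intro add_nonneg_nonneg mult_nonneg_nonneg) (auto simp: mult_mono)
  then show ?thesis
    using assms True
    by (simp add: one_minus_pow_neg_even one_minus_pow_neg_odd u_def w_def algebra_simps)
next
  case False
  then have "odd (e + d)" using assms by simp
  then show ?thesis
    using one_minus_pow_neg_pair_le_1[OF assms] one_minus_pow_neg_pair_ge_1 order_trans by blast
qed

lemma one_minus_pow_neg_ge: "1 - r ^ k \<le> one_minus_pow (-r) k"
  using r_pos by (cases "even k") (simp_all add: one_minus_pow_neg_even one_minus_pow_neg_odd)

lemma prod_one_minus_pow_neg_shift_ge: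
  assumes "even a" "2 \<le> a"
  shows "(\<Prod>k<L. one_minus_pow (-r) (a + k)) \<le> (\<Prod>k<L. one_minus_pow (-r) (a + d + k))"
  using assms
proof (induction L arbitrary: a rule: nat_induct2)
  case 1
  have "1 - r ^ a \<le> 1 - r ^ (a + d)" using r_pos r_le_half by (simp add: power_decreasing)
  then show ?case
    using one_minus_pow_neg_ge[of "a + d"] 1 by (simp add: one_minus_pow_neg_even)
next
  case (step L)
  have "(\<Prod>k<L. one_minus_pow (-r) (a + 2 + k)) \<le> (\<Prod>k<L. one_minus_pow (-r) (a + d + 2 + k))"
    using step.IH[of "a + 2"] step.prems by simp
  moreover have "0 \<le> one_minus_pow (-r) (a + d) * one_minus_pow (-r) (Suc (a + d))"
    using step.prems by (intro mult_nonneg_nonneg less_imp_le one_minus_pow_neg_pos) auto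
  moreover have "0 \<le> (\<Prod>k<L. one_minus_pow (-r) (a + 2 + k))"
    by (rule prod_one_minus_pow_neg_nonneg) simp
  ultimately show ?case
    unfolding prod_lessThan_add2 by (intro mult_mono one_minus_pow_neg_pair_mono step.prems(1))
qed simp

lemma prod_one_minus_pow_neg_from_even_le:
  assumes "even a" "2 \<le> a"
  shows "(\<Prod>k<L. one_minus_pow (-r) (a + k)) \<le> 1 + r ^ (a + 1)"
  using assms
proof (induction L arbitrary: a rule: nat_induct2)
  case (step L)
  have "(\<Prod>k<L. one_minus_pow (-r) (a + 2 + k)) \<le> 1 + r ^ (a + 2 + 1)"
    using step.IH[of "a + 2"] step.prems by simp
  also have "\<dots> \<le> 1 + r ^ (a + 1)"
    using r_pos r_le_half by (intro add_left_mono power_decreasing) auto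
  finally have "one_minus_pow (-r) a * one_minus_pow (-r) (Suc a)
      * (\<Prod>k<L. one_minus_pow (-r) (a + 2 + k)) \<le> 1 * (1 + r ^ (a + 1))"
    by (rule mult_mono[OF one_minus_pow_neg_pair_le_1[OF step.prems(1)]])
       (simp_all add: prod_one_minus_pow_neg_nonneg)
  then show ?case unfolding prod_lessThan_add2 by simp
next
  case 1
  have "0 \<le> r ^ a" "0 \<le> r ^ (a + 1)" using r_pos by simp_all
  then show ?case using 1 by (simp add: one_minus_pow_neg_even)
qed (use r_pos in simp)

lemma prod_one_minus_pow_neg_initial_le:
  assumes "2 \<le> s"
  shows "(\<Prod>i\<in>{1..s}. one_minus_pow (-r) i) \<le> (1 + r) * (1 - r\<^sup>2) * ((1 + r ^ 3) * (1 + r ^ 5))"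
proof -
  obtain L where s: "s = L + 2" using assms le_Suc_ex by (metis add.commute)
  have tail: "(\<Prod>k<L. one_minus_pow (-r) (3 + k)) \<le> (1 + r ^ 3) * (1 + r ^ 5)"
  proof (cases L)
    case 0
    then show ?thesis using mult_mono[of 1 "1 + r ^ 3" 1 "1 + r ^ 5"] r_pos by simp
  next
    case (Suc L')
    have "(\<Prod>k<L'. one_minus_pow (-r) (4 + k)) \<le> 1 + r ^ (4 + 1)"
      by (rule prod_one_minus_pow_neg_from_even_le) auto
    then have "one_minus_pow (-r) 3 * (\<Prod>k<L'. one_minus_pow (-r) (4 + k))
        \<le> (1 + r ^ 3) * (1 + r ^ 5)"
      using r_pos
      by (intro mult_mono) (simp_all add: one_minus_pow_neg_odd prod_one_minus_pow_neg_nonneg)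
    then show ?thesis
      unfolding Suc by (simp only: prod.lessThan_Suc_shift) (simp add: add.commute)
  qed
  have "(\<Prod>i\<in>{1..s}. one_minus_pow (-r) i) = (\<Prod>k<L + 2. one_minus_pow (-r) (1 + k))"
    unfolding s by (simp add: prod.atLeast1_atMost_eq)
  also have "\<dots> = (1 + r) * (1 - r\<^sup>2) * (\<Prod>k<L. one_minus_pow (-r) (3 + k))"
    unfolding prod_lessThan_add2 by (simp add: one_minus_pow_def numeral_3_eq_3 power2_eq_square)
  also have "\<dots> \<le> (1 + r) * (1 - r\<^sup>2) * ((1 + r ^ 3) * (1 + r ^ 5))"
    using tail r_pos r_le_half by (intro mult_left_mono) (auto simp: power2_eq_square mult_le_one)
  finally show ?thesis .
qed

lemma prod_one_minus_pow_neg_ge: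
  assumes "V \<subseteq> {1..N}"
  shows "1 - r\<^sup>2 / (1 - r\<^sup>2) \<le> (\<Prod>v\<in>V. one_minus_pow (-r) v)"
proof -
  define a where "a v = (if even v then r ^ v else 0)" for v :: nat
  have fin: "finite V" using assms finite_subset by blast
  have "1 - r\<^sup>2 / (1 - r\<^sup>2) \<le> 1 - (\<Sum>v\<in>{v\<in>V. even v}. r ^ v)"
    using sum_even_powers_le[OF assms r_pos] r_le_half by simp
  also have "\<dots> = 1 - sum a V" using fin by (simp add: a_def sum.inter_filter)
  also have "\<dots> \<le> (\<Prod>v\<in>V. 1 - a v)"
    by (rule Weierstrass_prod_ineq) (use r_pos r_le_half in \<open>auto simp: a_def power_le_one\<close>)
  also have "\<dots> \<le> (\<Prod>v\<in>V. one_minus_pow (-r) v)"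
    using r_pos r_le_half
    by (intro prod_mono)
       (auto simp: a_def one_minus_pow_neg_even one_minus_pow_neg_odd power_le_one)
  finally show ?thesis .
qed

end

lemma first_row_ratio_Nil:
  assumes "\<bar>t\<bar> < 1"
  shows "first_row_ratio t x [] = 1"
  unfolding first_row_ratio_def
proof (intro prod.neutral ballI)
  fix j assume "j \<in> {..<x}"
  then have "0 < one_minus_pow t (x - j)" using assms by (intro one_minus_pow_pos) auto
  then show "one_minus_pow t (sum_list [] + x - j) / one_minus_pow t (x - j + conj_part [] j) = 1"
    by simp
qed

lemma first_row_ratio_ones:
  assumes "\<forall>p\<in>set mu. p = 1" "\<bar>t\<bar> < 1"
  shows "first_row_ratio t 1 mu = 1"
proof -
  have "sum_list mu = length mu" using assms(1) by (induction mu) auto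
  moreover have "{i. i < length mu \<and> 0 < mu ! i} = {..<length mu}"
    using assms(1) nth_mem by fastforce
  then have "conj_part mu 0 = length mu" unfolding conj_part_def by simp
  moreover have "0 < one_minus_pow t (Suc (length mu))"
    using assms(2) by (simp add: one_minus_pow_pos)
  ultimately show ?thesis unfolding first_row_ratio_def by simp
qed

lemma first_row_ratio_ge_1:
  assumes "0 \<le> t" "t < 1" "\<forall>p\<in>set mu. 0 < p"
  shows "1 \<le> first_row_ratio t x mu"
  unfolding first_row_ratio_def
proof (rule prod_ge_1)
  fix j assume "j \<in> {..<x}"
  then have "x - j + conj_part mu j \<le> sum_list mu + x - j" "1 \<le> x - j + conj_part mu j"
    using conj_part_le_sum_list[OF assms(3), of j] by auto
  then have "t ^ (sum_list mu + x - j) \<le> t ^ (x - j + conj_part mu j)"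
    "0 < one_minus_pow t (x - j + conj_part mu j)"
    using assms(1,2) by (simp_all add: power_decreasing one_minus_pow_pos)
  then show "1 \<le> one_minus_pow t (sum_list mu + x - j) / one_minus_pow t (x - j + conj_part mu j)"
    by (simp add: one_minus_pow_def)
qed

text \<open>The first-row hooks \<open>x - j + \<mu>'\<^sub>j\<close> strictly decrease in \<open>j\<close>, so they are \<open>x\<close> distinct
  elements of \<open>{1..s + x}\<close>; \<open>V\<close> is their complement.\<close>

lemma first_row_hooks_complement:
  fixes f :: "nat \<Rightarrow> 'a::comm_monoid_mult"
  assumes pos: "\<forall>p\<in>set mu. 0 < p"
  obtains V where "V \<subseteq> {1..sum_list mu + x}" "card V = sum_list mu"
    "(\<Prod>j<x. f (x - j + conj_part mu j)) * prod f V
       = prod f {1..sum_list mu} * (\<Prod>j<x. f (sum_list mu + x - j))"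
proof -
  define s where "s = sum_list mu"
  define h where "h j = x - j + conj_part mu j" for j
  have inj: "inj_on h {..<x}"
  proof (rule inj_onI)
    fix j j' assume "j \<in> {..<x}" "j' \<in> {..<x}" "h j = h j'"
    then show "j = j'"
      using conj_part_antimono[of j j' mu] conj_part_antimono[of j' j mu] unfolding h_def
      by (cases j j' rule: linorder_cases) auto
  qed
  have hooks: "h ` {..<x} \<subseteq> {1..s + x}"
  proof (rule image_subsetI)
    fix j assume "j \<in> {..<x}"
    then show "h j \<in> {1..s + x}"
      using conj_part_le_sum_list[OF pos, of j] unfolding h_def s_def by auto
  qed
  define V where "V = {1..s + x} - h ` {..<x}"
  have card: "card V = s"
    using hooks inj unfolding V_def by (simp add: card_Diff_subset card_image)
  have "prod f {1..s + x} = prod f (h ` {..<x}) * prod f V"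
    using hooks unfolding V_def by (simp add: prod.subset_diff mult.commute)
  then have "(\<Prod>j<x. f (h j)) * prod f V = prod f {1..s + x}"
    using inj by (simp add: prod.reindex)
  also have "\<dots> = prod f {1..s} * (\<Prod>j<x. f (s + x - j))" by (rule prod_atLeast1_atMost_add)
  finally show ?thesis using that[of V] card unfolding V_def s_def h_def by blast
qed

lemma initial_bound_le_q_complement_bound:
  assumes "q = 2 \<or> 3 \<le> (q::real)"
  shows "(1 + 1/q) * (1 - (1/q)\<^sup>2) * ((1 + (1/q) ^ 3) * (1 + (1/q) ^ 5))
    \<le> q * (1 - (1/q)\<^sup>2 / (1 - (1/q)\<^sup>2))"
  using assms
proof
  assume "3 \<le> q"
  define r where "r = 1/q"
  have r: "0 < r" "r \<le> 1/3" using \<open>3 \<le> q\<close> by (auto simp: r_def field_simps)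
  then have r2: "r\<^sup>2 \<le> 1/9" using power_mono[of r "1/3" 2] by (simp add: power2_eq_square)
  then have "q * (7/8) \<le> q * (1 - r\<^sup>2 / (1 - r\<^sup>2))"
    using \<open>3 \<le> q\<close> r by (intro mult_left_mono) (auto simp: field_simps)
  moreover have "r ^ 3 \<le> r" "r ^ 5 \<le> r"
    using r by (simp_all add: power_le_one power_decreasing[of 1 _ r, simplified])
  then have "(1 + r) * (1 - r\<^sup>2) * ((1 + r ^ 3) * (1 + r ^ 5)) \<le> (4/3) * 1 * ((4/3) * (4/3))"
    using r r2 by (intro mult_mono) auto
  ultimately show ?thesis using \<open>3 \<le> q\<close> unfolding r_def by linarith
qed (simp add: power_divide)

lemma prod_one_minus_pow_initial_le_prod:
  assumes q: "q = 2 \<or> 3 \<le> (q::real)" and V: "V \<subseteq> {1..N}" "card V = s" "1 \<le> s"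
  shows "(\<Prod>i\<in>{1..s}. one_minus_pow (-(1/q)) i) \<le> q * (\<Prod>v\<in>V. one_minus_pow (-(1/q)) v)"
proof -
  define r where "r = 1/q"
  have r: "0 < r" "r \<le> 1/2" and "2 \<le> q" using q by (auto simp: r_def)
  consider "s = 1" | "2 \<le> s" using V by linarith
  then have "(\<Prod>i\<in>{1..s}. one_minus_pow (-r) i) \<le> q * (\<Prod>v\<in>V. one_minus_pow (-r) v)"
  proof cases
    case 1
    then obtain v where "V = {v}" "1 \<le> v" using V by (auto simp: card_Suc_eq)
    have "1 - r\<^sup>2 \<le> one_minus_pow (-r) v"
    proof (cases "v = 1")
      case False
      then have "r ^ v \<le> r\<^sup>2" using r \<open>1 \<le> v\<close> by (intro power_decreasing) auto
      then show ?thesis using one_minus_pow_neg_ge[OF r, of v] by linarith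
    next
      case True
      have "1 - r\<^sup>2 \<le> 1 + r" using r zero_le_power2[of r] by linarith
      then show ?thesis using True by (simp add: one_minus_pow_def)
    qed
    moreover have "q * (1 - r\<^sup>2) = q - r"
      using \<open>2 \<le> q\<close> by (simp add: r_def power2_eq_square field_simps)
    then have "1 + r \<le> q * (1 - r\<^sup>2)" using \<open>2 \<le> q\<close> r by linarith
    ultimately show ?thesis
      using 1 \<open>V = {v}\<close> \<open>2 \<le> q\<close> by (simp add: one_minus_pow_def order_trans)
  next
    case 2
    have "(\<Prod>i\<in>{1..s}. one_minus_pow (-r) i) \<le> q * (1 - r\<^sup>2 / (1 - r\<^sup>2))"
      using prod_one_minus_pow_neg_initial_le[OF r 2] initial_bound_le_q_complement_bound[OF q]
      unfolding r_def by linarith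
    also have "\<dots> \<le> q * (\<Prod>v\<in>V. one_minus_pow (-r) v)"
      using prod_one_minus_pow_neg_ge[OF r V(1)] \<open>2 \<le> q\<close> by simp
    finally show ?thesis .
  qed
  then show ?thesis unfolding r_def .
qed

lemma first_row_ratio_unitary_ge:
  assumes q: "q = 2 \<or> 3 \<le> (q::real)" and pos: "\<forall>p\<in>set mu. 0 < p" and "mu \<noteq> []"
  shows "1 \<le> q * first_row_ratio (-(1/q)) x mu"
proof -
  define f where "f = one_minus_pow (-(1/q))"
  define s where "s = sum_list mu"
  define num den where "num = (\<Prod>j<x. f (s + x - j))" and "den = (\<Prod>j<x. f (x - j + conj_part mu j))"
  have f_pos: "0 < f k" if "1 \<le> k" for k
    unfolding f_def using q that by (intro one_minus_pow_pos) auto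
  have "1 \<le> s" using pos \<open>mu \<noteq> []\<close> unfolding s_def by (cases mu) auto
  obtain V where V: "V \<subseteq> {1..s + x}" "card V = s" and eq: "den * prod f V = prod f {1..s} * num"
    using first_row_hooks_complement[OF pos] unfolding s_def num_def den_def by blast
  have "0 < num" "0 < den" "0 < prod f V"
    unfolding num_def den_def using V \<open>1 \<le> s\<close> by (auto intro!: prod_pos f_pos)
  have key: "prod f {1..s} \<le> q * prod f V"
    unfolding f_def using prod_one_minus_pow_initial_le_prod[OF q V \<open>1 \<le> s\<close>] .
  then have "den * prod f V \<le> (q * num) * prod f V"
    unfolding eq using mult_right_mono[OF key less_imp_le[OF \<open>0 < num\<close>]] by (simp add: mult_ac)
  then have "den \<le> q * num" using \<open>0 < prod f V\<close> by simp
  moreover have "first_row_ratio (-(1/q)) x mu = num / den"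
    unfolding first_row_ratio_def num_def den_def f_def s_def by (simp add: prod_dividef)
  ultimately show ?thesis using \<open>0 < den\<close> by (simp add: le_divide_eq)
qed

lemma unip_degree_GL_ge:
  assumes "1 < q" "sorted_wrt (\<ge>) lam" "\<forall>p\<in>set lam. 0 < p"
  shows "q ^ pair_products lam \<le> unip_degree 1 q lam"
  using assms(2,3)
proof (induction lam)
  case (Cons x mu)
  have "1 \<le> first_row_ratio (1/q) x mu"
    using Cons.prems assms(1) by (intro first_row_ratio_ge_1) auto
  then have "q ^ (x * sum_list mu) * 1 * q ^ pair_products mu
      \<le> q ^ (x * sum_list mu) * first_row_ratio (1/q) x mu * unip_degree 1 q mu"
    using Cons assms(1) by (intro mult_mono) auto
  then show ?case
    using unip_degree_Cons[OF Cons.prems(1), of q 1] assms(1) by (simp add: power_add)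
qed (simp add: unip_degree_Nil)

lemma first_row_ratio_unitary_step:
  assumes q: "q = 2 \<or> 3 \<le> (q::real)"
    and sorted: "sorted_wrt (\<ge>) (x # mu)" and pos: "\<forall>p\<in>set (x # mu). 0 < p"
  shows "1 \<le> q ^ (if 2 \<le> x then 1 else 0) * first_row_ratio (-(1/q)) x mu"
proof -
  have t: "\<bar>-(1/q)\<bar> < 1" using q by auto
  consider "mu = []" | "mu \<noteq> []" "2 \<le> x" | "x = 1" using pos by fastforce
  then show ?thesis
  proof cases
    case 3
    then have "\<forall>p\<in>set mu. p = 1" using sorted pos by fastforce
    then show ?thesis using first_row_ratio_ones[OF _ t] 3 by simp
  qed (use first_row_ratio_Nil[OF t] first_row_ratio_unitary_ge[OF q] pos q in auto)
qed

lemma unip_degree_GU_ge: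
  assumes q: "q = 2 \<or> 3 \<le> (q::real)" and "sorted_wrt (\<ge>) lam" "\<forall>p\<in>set lam. 0 < p"
  shows "q ^ pair_products lam \<le> q ^ big_parts lam * unip_degree (-1) q lam"
  using assms(2,3)
proof (induction lam)
  case (Cons x mu)
  have "0 < q" using q by auto
  have "q ^ (x * sum_list mu) * 1 * q ^ pair_products mu
      \<le> q ^ (x * sum_list mu) * (q ^ (if 2 \<le> x then 1 else 0) * first_row_ratio (-(1/q)) x mu)
        * (q ^ big_parts mu * unip_degree (-1) q mu)"
    using Cons first_row_ratio_unitary_step[OF q Cons.prems] \<open>0 < q\<close> by (intro mult_mono) auto
  then show ?case
    using unip_degree_Cons[OF Cons.prems(1), of q "-1"] \<open>0 < q\<close> by (simp add: power_add mult_ac)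
qed (simp add: unip_degree_Nil)

lemma first_row_ratio_rectangle:
  "first_row_ratio t m [m]
    = (\<Prod>k<m. one_minus_pow t (2 + (m - 1) + k)) / (\<Prod>k<m. one_minus_pow t (2 + k))"
proof -
  have "(\<Prod>j<m. one_minus_pow t (m + m - j))
      = (\<Prod>j<m. one_minus_pow t (2 + (m - 1) + (m - Suc j)))"
    by (rule prod.cong) (auto intro!: arg_cong[where f = "one_minus_pow t"])
  moreover have "(\<Prod>j<m. one_minus_pow t (m - j + conj_part [m] j))
      = (\<Prod>j<m. one_minus_pow t (2 + (m - Suc j)))"
    by (rule prod.cong) (auto simp: conj_part_Cons intro!: arg_cong[where f = "one_minus_pow t"])
  ultimately show ?thesis
    unfolding first_row_ratio_def prod_dividef
    using prod.nat_diff_reindex[of "\<lambda>k. one_minus_pow t (2 + (m - 1) + k)" m]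
      prod.nat_diff_reindex[of "\<lambda>k. one_minus_pow t (2 + k)" m]
    by simp
qed

lemma unip_degree_single_row: "q \<noteq> 0 \<Longrightarrow> \<bar>eps / q\<bar> < 1 \<Longrightarrow> unip_degree eps q [m] = 1"
  using unip_degree_Cons[of m "[]" q eps] first_row_ratio_Nil[of "eps / q" m]
  by (simp add: unip_degree_Nil)

lemma unip_degree_GU_rectangle:
  assumes q: "q = 2 \<or> 3 \<le> (q::real)" and "1 \<le> m"
  shows "q ^ (m * m) \<le> unip_degree (-1) q [m, m]"
proof -
  define r where "r = 1/q"
  have r: "0 < r" "r \<le> 1/2" and "0 < q" using q by (auto simp: r_def)
  have "(\<Prod>k<m. one_minus_pow (-r) (2 + k)) \<le> (\<Prod>k<m. one_minus_pow (-r) (2 + (m - 1) + k))"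
    by (rule prod_one_minus_pow_neg_shift_ge[OF r]) auto
  moreover have "0 < (\<Prod>k<m. one_minus_pow (-r) (2 + k))"
    by (intro prod_pos one_minus_pow_neg_pos[OF r]) auto
  ultimately have "1 \<le> first_row_ratio (-r) m [m]"
    unfolding first_row_ratio_rectangle by simp
  moreover have "unip_degree (-1) q [m] = 1" by (rule unip_degree_single_row) (use q in auto)
  ultimately show ?thesis
    using unip_degree_Cons[of m "[m]" q "-1"] \<open>0 < q\<close> by (simp add: r_def)
qed

lemma unip_degree_GU_221:
  assumes q: "q = 2 \<or> 3 \<le> (q::real)"
  shows "q ^ 7 \<le> unip_degree (-1) q [2, 2, 1]"
proof -
  define r where "r = 1/q"
  have r: "0 < r" "r \<le> 1/2" and "0 < q" using q by (auto simp: r_def)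
  have "first_row_ratio (-r) 2 [2, 1]
      = one_minus_pow (-r) 5 / one_minus_pow (-r) 4 * (one_minus_pow (-r) 4 / one_minus_pow (-r) 2)"
    by (simp add: first_row_ratio_def lessThan_Suc conj_part_Cons eval_nat_numeral)
  moreover have "0 < one_minus_pow (-r) 4" "0 < one_minus_pow (-r) 2"
    using one_minus_pow_neg_pos[OF r] by auto
  moreover have "1 \<le> one_minus_pow (-r) 5" "one_minus_pow (-r) 2 \<le> 1"
    using r by (simp_all add: one_minus_pow_def)
  ultimately have "1 \<le> first_row_ratio (-r) 2 [2, 1]" by simp
  moreover have "1 \<le> q * first_row_ratio (-r) 2 [1]"
    using first_row_ratio_unitary_ge[OF q, of "[1]" 2] by (simp add: r_def)
  ultimately have "q ^ 6 * 1 * (q * 1)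
      \<le> q ^ 6 * first_row_ratio (-r) 2 [2, 1] * (q * (q * first_row_ratio (-r) 2 [1]))"
    using \<open>0 < q\<close> by (intro mult_mono) auto
  moreover have "unip_degree (-1) q [1] = 1" by (rule unip_degree_single_row) (use q in auto)
  then have "unip_degree (-1) q [2, 2, 1]
      = q ^ 6 * first_row_ratio (-r) 2 [2, 1] * (q * (q * first_row_ratio (-r) 2 [1]))"
    using unip_degree_Cons[of 2 "[2, 1]" q "-1"] unip_degree_Cons[of 2 "[1]" q "-1"] \<open>0 < q\<close>
    by (simp add: r_def power2_eq_square)
  ultimately show ?thesis by (simp add: eval_nat_numeral)
qed

lemma unip_degree_ge_power_quarter_square:
  assumes q: "q = 2 \<or> 3 \<le> (q::real)" and eps: "eps = 1 \<or> eps = -1"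
    and lam: "is_partition lam n" and half: "2 * hd lam \<le> n"
  obtains N where "n\<^sup>2 \<le> 4 * N" "q ^ N \<le> unip_degree eps q lam"
proof (cases lam)
  case Nil
  then show ?thesis using that[of 0] lam by (simp add: is_partition_def unip_degree_Nil)
next
  case (Cons x mu)
  have sorted: "sorted_wrt (\<ge>) lam" and pos: "\<forall>p\<in>set lam. 0 < p" and n: "n = sum_list lam"
    using lam by (auto simp: is_partition_def)
  have le_x: "\<forall>p\<in>set lam. p \<le> x" and "x \<le> sum_list mu" using sorted half Cons n by auto
  consider "eps = 1" | "eps = -1" "mu = [x]" | "eps = -1" "lam = [2, 2, 1]"
    | "eps = -1" "mu \<noteq> [x]" "lam \<noteq> [2, 2, 1]"
    using eps by blast
  then show ?thesis
  proof cases
    case 1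
    then show ?thesis
      using that[of "pair_products lam"] square_le_four_pair_products[OF le_x] half Cons n
        unip_degree_GL_ge[OF _ sorted pos, of q] q
      by fastforce
  next
    case 2
    then show ?thesis
      using that[of "x * x"] unip_degree_GU_rectangle[OF q, of x] Cons n pos
      by (simp add: power2_eq_square algebra_simps)
  next
    case 3
    then show ?thesis using that[of 7] unip_degree_GU_221[OF q] n by simp
  next
    case 4
    have ineq: "n\<^sup>2 + 4 * big_parts lam \<le> 4 * pair_products lam"
      using square_add_four_big_parts_le[of x mu] 4 pos sorted \<open>x \<le> sum_list mu\<close> Cons n by simp
    define N where "N = pair_products lam - big_parts lam"
    have N: "n\<^sup>2 \<le> 4 * N" using ineq unfolding N_def by linarith
    have "q ^ N * q ^ big_parts lam \<le> unip_degree (-1) q lam * q ^ big_parts lam"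
      using unip_degree_GU_ge[OF q sorted pos] ineq
      by (simp add: N_def power_add[symmetric] mult.commute)
    moreover have "0 < q ^ big_parts lam" using q by auto
    ultimately have "q ^ N \<le> unip_degree (-1) q lam" by simp
    then show ?thesis using that N 4 by simp
  qed
qed

theorem lemma6p5:
  fixes n :: nat and eps :: real and p k :: nat and lam :: "nat list"
  assumes "n \<ge> 2"
    and "eps = 1 \<or> eps = -1"
    and "prime p" and "k \<ge> 1"
    and "is_partition lam n"
    and "2 * hd lam \<le> n"
  shows "unip_degree eps (real (p ^ k)) lam \<ge> real (p ^ k) powr (real n ^ 2 / 4)"
proof -
  define q where "q = real (p ^ k)"
  have "p ^ 1 \<le> p ^ k" using prime_gt_0_nat[OF assms(3)] assms(4) by (intro power_increasing) auto
  then have "2 \<le> p ^ k" using prime_ge_2_nat[OF assms(3)] by simp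
  then consider "p ^ k = 2" | "3 \<le> p ^ k" by linarith
  then have q: "q = 2 \<or> 3 \<le> q"
  proof cases
    case 2
    then have "real 3 \<le> q" unfolding q_def by (simp only: of_nat_le_iff)
    then show ?thesis by simp
  qed (simp add: q_def)
  obtain N where N: "n\<^sup>2 \<le> 4 * N" "q ^ N \<le> unip_degree eps q lam"
    using unip_degree_ge_power_quarter_square[OF q assms(2,5,6)] .
  have "q powr (real n ^ 2 / 4) \<le> q powr real N"
    using N(1) q by (intro powr_mono) (auto simp flip: of_nat_power of_nat_mult)
  also have "\<dots> = q ^ N" using q by (auto simp: powr_realpow)
  finally show ?thesis using N(2) unfolding q_def by linarith
qed

end
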